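(* Let $s>1/2$, $x\in\mathbb R$, and let $u(t)$ be a smooth curve in $H^s_+$ such that $I-xH_{u(t)}^2$ is invertible for all $t$ and $$\partial_tu=\frac{x}{2i}\,w\,H_uw,\qquad w=w(x):=(I-xH_u^2)^{-1}(1).$$ Then $$\partial_tK_u=[C_u^x,K_u],\qquad C_u^x(h)=\frac{x}{4i}\Big(w\,\Pi(\bar wh)+x\,H_uw\,\Pi(\overline{H_uw}\,h)\Big).$$
   Context: $L^2_+$ is the Hardy space of the circle, $(u|v)=\int u\bar v\frac{d\theta}{2\pi}$, $H^s_+=H^s\cap L^2_+$, $\Pi$ the Szegő projector. $H_u(h)=\Pi(u\bar h)$ (antilinear Hankel operator), $T_z$ multiplication by $z$, $K_u=H_uT_z$. The right-hand side $\frac x{2i}wH_uw$ is the Hamiltonian vector field of $u\mapsto J(x)(u)=((I-xH_u^2)^{-1}(1)|1)$ for the symplectic form $4\,\mathrm{Im}(u|v)$. *)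

theory Defs
  imports "HOL-Analysis.Analysis"
begin

text \<open>Functions in the Hardy space L2_+ of the circle are represented by their
  Fourier coefficients: u = sum over n >= 0 of u n z^n, i.e. a sequence nat => complex.\<close>

type_synonym hardy = "nat \<Rightarrow> complex"

text \<open>Sobolev weight (1+n)^(2s) (equivalent to the usual <n>^(2s) weight).\<close>
definition in_Hs :: "real \<Rightarrow> hardy \<Rightarrow> bool" where
  "in_Hs r f \<longleftrightarrow> summable (\<lambda>n. ((1 + real n) powr (2*r)) * (cmod (f n))^2)"

abbreviation L2plus :: "hardy \<Rightarrow> bool" where
  "L2plus f \<equiv> in_Hs 0 f"

definition hs_norm :: "real \<Rightarrow> hardy \<Rightarrow> real" where
  "hs_norm r f = sqrt (\<Sum>n. ((1 + real n) powr (2*r)) * (cmod (f n))^2)"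

definition hs_has_deriv :: "real \<Rightarrow> (real \<Rightarrow> hardy) \<Rightarrow> hardy \<Rightarrow> real \<Rightarrow> bool" where
  "hs_has_deriv s u u' t \<longleftrightarrow> in_Hs s u' \<and>
     ((\<lambda>\<tau>. hs_norm s (\<lambda>n. (u (t + \<tau>) n - u t n) / complex_of_real \<tau> - u' n)) \<longlongrightarrow> 0) (at 0)"

definition smooth_Hs_curve :: "real \<Rightarrow> (real \<Rightarrow> hardy) \<Rightarrow> bool" where
  "smooth_Hs_curve s u \<longleftrightarrow> (\<exists>D :: nat \<Rightarrow> real \<Rightarrow> hardy. D 0 = u \<and>
     (\<forall>k t. in_Hs s (D k t) \<and> hs_has_deriv s (D k) (D (Suc k) t) t))"

definition one_h :: hardy where
  "one_h = (\<lambda>n. if n = 0 then 1 else 0)"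

text \<open>Product of two elements of L2_+ (Cauchy product of Fourier coefficients).\<close>
definition hmult :: "hardy \<Rightarrow> hardy \<Rightarrow> hardy" where
  "hmult f g = (\<lambda>n. \<Sum>k\<le>n. f k * g (n - k))"

text \<open>Pi (conj w * h): Szego projection of conj(w) h.\<close>
definition Pi_conj_mult :: "hardy \<Rightarrow> hardy \<Rightarrow> hardy" where
  "Pi_conj_mult w h = (\<lambda>n. \<Sum>k. cnj (w k) * h (n + k))"

text \<open>Hankel operator H_u h = Pi (u conj h).\<close>
definition hankel :: "hardy \<Rightarrow> hardy \<Rightarrow> hardy" where
  "hankel u h = (\<lambda>n. \<Sum>k. u (n + k) * cnj (h k))"

text \<open>Multiplication by z.\<close>
definition Tz :: "hardy \<Rightarrow> hardy" where
  "Tz h = (\<lambda>n. if n = 0 then 0 else h (n - 1))"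

definition Kop :: "hardy \<Rightarrow> hardy \<Rightarrow> hardy" where
  "Kop u h = hankel u (Tz h)"

text \<open>I - x H_u^2 is invertible on L2_+ (bijective; bounded inverse is automatic).\<close>
definition inv_op :: "real \<Rightarrow> hardy \<Rightarrow> bool" where
  "inv_op x u \<longleftrightarrow> (\<forall>f. L2plus f \<longrightarrow>
     (\<exists>!g. L2plus g \<and> (\<lambda>n. g n - complex_of_real x * hankel u (hankel u g) n) = f))"

definition w_of :: "real \<Rightarrow> hardy \<Rightarrow> hardy" where
  "w_of x u = (THE g. L2plus g \<and> (\<lambda>n. g n - complex_of_real x * hankel u (hankel u g) n) = one_h)"

definition C_op :: "real \<Rightarrow> hardy \<Rightarrow> hardy \<Rightarrow> hardy" where
  "C_op x u h = (let w = w_of x u; v = hankel u w in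
     (\<lambda>n. complex_of_real x / (4 * \<i>) *
        (hmult w (Pi_conj_mult w h) n + complex_of_real x * hmult v (Pi_conj_mult v h) n)))"

end

theory Submission
  imports Defs
begin

text \<open>
  Everything is computed on Fourier coefficients;
  \<open>a\<^sup>*\<close> denotes the complex conjugate.

  The proof has an analytic and an algebraic half. Analytically, \<open>f \<mapsto> K\<^sub>f h\<close> is linear and
  bounded from \<open>H\<^sup>s\<close> to \<open>\<ell>\<^sup>2\<close> (a Hilbert--Schmidt type estimate, using \<open>s > 1/2\<close>), so
  \<open>\<partial>\<^sub>tK\<^sub>u h = K\<^sub>u\<^sub>' h\<close>. Algebraically, \<open>K\<^sub>u\<^sub>' = [C\<^sub>u\<^sup>x, K\<^sub>u]\<close>: both compositions in the
  commutator are expanded as series \<open>\<Sum>\<^sub>k \<kappa>\<^sub>k h\<^sub>k\<^sup>*\<close>, using the symmetry of the Hankel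
  form and the adjointness of multiplication and Toeplitz operators, and the four kernels add
  up to the kernel of \<open>K\<^sub>u\<^sub>'\<close> thanks to \<open>xH\<^sub>u\<^sup>2w = w - 1\<close>. All rearrangements of series are
  justified by absolute convergence, for which we work with \<open>\<ell>\<^sup>1\<close> symbols: \<open>H\<^sup>s \<subseteq> \<ell>\<^sup>1\<close>, and
  \<open>w \<in> \<ell>\<^sup>1\<close> because \<open>w\<close> is a bounded fixed point of an \<open>\<ell>\<^sup>1\<close>-contraction modulo a finite
  rank perturbation.
\<close>

section \<open>Series: elementary facts and rearrangement of double series\<close>

lemma term_le_suminf:
  fixes f :: "nat \<Rightarrow> real"
  assumes "summable f" "\<And>n. f n \<ge> 0"
  shows "f n \<le> suminf f"
  using sum_le_suminf[OF assms(1), of "{n}"] assms(2) by auto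

lemma tail_le_suminf:
  fixes g :: "nat \<Rightarrow> real"
  assumes "summable g" "\<And>n. g n \<ge> 0"
  shows "summable (\<lambda>k. g (c + k))" and "(\<Sum>k. g (c + k)) \<le> suminf g"
proof -
  show "summable (\<lambda>k. g (c + k))"
    using summable_ignore_initial_segment[OF assms(1), of c] by (simp add: add.commute)
  have "(\<Sum>k. g (k + c)) = suminf g - (\<Sum>i<c. g i)"
    by (rule suminf_minus_initial_segment[OF assms(1)])
  moreover have "(\<Sum>i<c. g i) \<ge> 0" using assms(2) by (simp add: sum_nonneg)
  ultimately show "(\<Sum>k. g (c + k)) \<le> suminf g" by (simp add: add.commute)
qed

lemma suminf_from:
  fixes X :: "nat \<Rightarrow> 'a::real_normed_vector"
  assumes "summable (\<lambda>p. X (p + j))"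
  shows "(\<Sum>k. if j \<le> k then X k else 0) = (\<Sum>p. X (p + j))"
proof -
  let ?f = "\<lambda>k. if j \<le> k then X k else 0"
  have shift: "(\<lambda>p. ?f (p + j)) = (\<lambda>p. X (p + j))" by auto
  have "summable ?f" using assms shift summable_iff_shift[of ?f j] by simp
  then have "(\<Sum>p. ?f (p + j)) = suminf ?f - (\<Sum>i<j. ?f i)"
    by (rule suminf_minus_initial_segment)
  then show ?thesis using shift by simp
qed

lemma suminf_eq_infsum_nat:
  fixes f :: "nat \<Rightarrow> 'a::banach"
  assumes "summable (\<lambda>n. norm (f n))"
  shows "infsum f UNIV = suminf f"
  using norm_summable_imp_has_sum[OF assms, of "suminf f"] assms
  by (simp add: infsumI summable_norm_cancel summable_sums)

lemma abs_summable_on_pairs: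
  fixes f :: "nat \<Rightarrow> nat \<Rightarrow> 'a::banach"
  assumes le: "\<And>i j. norm (f i j) \<le> g i j"
    and rows: "\<And>i. summable (g i)" and row_sums: "summable (\<lambda>i. suminf (g i))"
  shows "(\<lambda>(i, j). norm (f i j)) summable_on UNIV \<times> UNIV"
proof -
  have g0: "g i j \<ge> 0" for i j using le[of i j] norm_ge_zero[of "f i j"] by linarith
  have "(\<lambda>x. norm ((\<lambda>(i, j). g i j) x)) summable_on Sigma UNIV (\<lambda>_. UNIV)"
    unfolding Infinite_Sum.abs_summable_on_Sigma_iff
  proof (intro conjI ballI)
    fix i :: nat
    show "(\<lambda>j. norm ((\<lambda>(i, j). g i j) (i, j))) summable_on UNIV"
      using rows[of i] g0 by (simp add: summable_on_UNIV_nonneg_real_iff)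
    have "(\<Sum>\<^sub>\<infinity>j. norm ((\<lambda>(i, j). g i j) (i', j))) = suminf (g i')" for i'
      using g0 rows[of i'] by (simp add: suminf_eq_infsum_nat)
    moreover have "suminf (g i') \<ge> 0" for i' using g0 rows[of i'] by (simp add: suminf_nonneg)
    ultimately show "(\<lambda>i. norm (\<Sum>\<^sub>\<infinity>j. norm ((\<lambda>(i, j). g i j) (i, j)))) summable_on UNIV"
      using row_sums by (simp add: summable_on_UNIV_nonneg_real_iff)
  qed
  then have "(\<lambda>x. norm ((\<lambda>(i, j). f i j) x)) summable_on UNIV \<times> UNIV"
    by (rule Infinite_Sum.abs_summable_on_comparison_test) (use le g0 in auto)
  then show ?thesis by (simp add: case_prod_unfold)
qed

lemma suminf_iterated_eq_infsum:
  fixes F :: "nat \<Rightarrow> nat \<Rightarrow> 'a::banach"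
  assumes abs: "(\<lambda>(i, j). norm (F i j)) summable_on UNIV \<times> UNIV"
  shows "(\<Sum>i. \<Sum>j. F i j) = (\<Sum>\<^sub>\<infinity>i. \<Sum>\<^sub>\<infinity>j. F i j)"
proof -
  have row: "summable (\<lambda>j. norm (F i j))" for i
    using summable_on_SigmaD1[of "\<lambda>i j. norm (F i j)" UNIV "\<lambda>_. UNIV" i] abs
    by (simp add: summable_on_UNIV_nonneg_real_iff case_prod_unfold)
  have "(\<lambda>i. \<Sum>\<^sub>\<infinity>j. norm (F i j)) summable_on UNIV"
    using summable_on_Sigma_banach[of "\<lambda>i j. norm (F i j)" UNIV "\<lambda>_. UNIV"] abs
    by (auto simp: case_prod_unfold)
  then have "summable (\<lambda>i. \<Sum>j. norm (F i j))"
    using row by (simp add: suminf_eq_infsum_nat summable_on_UNIV_nonneg_real_iff suminf_nonneg)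
  then have "summable (\<lambda>i. norm (\<Sum>j. F i j))"
    by (rule summable_comparison_test'[where N=0]) (use row in \<open>auto intro: summable_norm\<close>)
  then show ?thesis using row by (simp add: suminf_eq_infsum_nat)
qed

lemma suminf_swap:
  fixes f :: "nat \<Rightarrow> nat \<Rightarrow> 'a::banach"
  assumes le: "\<And>i j. norm (f i j) \<le> g i j"
    and rows: "\<And>i. summable (g i)" and row_sums: "summable (\<lambda>i. suminf (g i))"
  shows "(\<Sum>i. \<Sum>j. f i j) = (\<Sum>j. \<Sum>i. f i j)"
proof -
  have abs: "(\<lambda>(i, j). norm (f i j)) summable_on UNIV \<times> UNIV"
    by (rule abs_summable_on_pairs[OF le rows row_sums])
  have abs': "(\<lambda>(j, i). norm (f i j)) summable_on UNIV \<times> UNIV"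
    using summable_on_swap[of "\<lambda>(i, j). norm (f i j)" UNIV UNIV] abs
    by (simp add: case_prod_unfold)
  have "(\<Sum>i. \<Sum>j. f i j) = (\<Sum>\<^sub>\<infinity>i. \<Sum>\<^sub>\<infinity>j. f i j)" by (rule suminf_iterated_eq_infsum[OF abs])
  also have "\<dots> = (\<Sum>\<^sub>\<infinity>j. \<Sum>\<^sub>\<infinity>i. f i j)"
    by (rule infsum_swap_banach) (use abs in \<open>simp add: abs_summable_summable case_prod_unfold\<close>)
  also have "\<dots> = (\<Sum>j. \<Sum>i. f i j)"
    by (rule suminf_iterated_eq_infsum[symmetric]) (use abs' in \<open>simp add: case_prod_unfold\<close>)
  finally show ?thesis .
qed

lemma suminf_triangle:
  fixes F :: "nat \<Rightarrow> nat \<Rightarrow> 'a::banach"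
  assumes le: "\<And>j p. norm (F (j + p) j) \<le> G j p"
    and rows: "\<And>j. summable (G j)" and row_sums: "summable (\<lambda>j. suminf (G j))"
  shows "(\<Sum>k. \<Sum>j\<le>k. F k j) = (\<Sum>j. \<Sum>p. F (j + p) j)"
proof -
  define E where "E j k = (if j \<le> k then F k j else 0)" for j k
  define g where "g j k = (if j \<le> k then G j (k - j) else 0)" for j k
  have le': "norm (E j k) \<le> g j k" for j k
    using le[of j "k - j"] unfolding E_def g_def by (cases "j \<le> k") auto
  have g_shift: "(\<lambda>p. g j (p + j)) = G j" for j unfolding g_def by auto
  have g_rows: "summable (g j)" for j
    using rows[of j] g_shift[of j] summable_iff_shift[of "g j" j] by simp
  have "suminf (g j) = suminf (G j)" for j
  proof -
    have "suminf (g j) = (\<Sum>k. if j \<le> k then g j k else 0)" unfolding g_def by (simp cong: if_cong)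
    also have "\<dots> = suminf (G j)" by (subst suminf_from) (use rows[of j] g_shift[of j] in simp_all)
    finally show ?thesis .
  qed
  then have g_row_sums: "summable (\<lambda>j. suminf (g j))" using row_sums by simp
  have "(\<Sum>j\<le>k. F k j) = (\<Sum>j. E j k)" for k
    unfolding E_def by (subst suminf_finite[of "{..k}"]) auto
  then have "(\<Sum>k. \<Sum>j\<le>k. F k j) = (\<Sum>k. \<Sum>j. E j k)" by simp
  also have "\<dots> = (\<Sum>j. \<Sum>k. E j k)" by (rule suminf_swap[OF le' g_rows g_row_sums, symmetric])
  also have "\<dots> = (\<Sum>j. \<Sum>p. F (j + p) j)"
  proof -
    have diag: "summable (\<lambda>p. F (p + j) j)" for j
    proof (rule summable_norm_cancel, rule summable_comparison_test'[OF rows[of j], where N=0])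
      fix p show "norm (norm (F (p + j) j)) \<le> G j p" using le[of j p] by (simp add: add.commute)
    qed
    have "(\<Sum>k. E j k) = (\<Sum>p. F (j + p) j)" for j
      unfolding E_def using suminf_from[OF diag[of j]] by (simp add: add.commute)
    then show ?thesis by simp
  qed
  finally show ?thesis .
qed
section \<open>Coefficient sequences: \<open>\<ell>\<^sup>1\<close>, \<open>\<ell>\<^sup>2\<close> and \<open>H\<^sup>s\<close>\<close>

lemma nonneg_series_bounded_partial_sums:
  fixes a :: "nat \<Rightarrow> real"
  assumes nonneg: "\<And>n. a n \<ge> 0" and bound: "\<And>N. (\<Sum>k<N. a k) \<le> B"
  shows "summable a" and "suminf a \<le> B"
proof -
  show s: "summable a"
    by (rule bounded_imp_summable[OF nonneg]) (use bound[of "Suc _"] lessThan_Suc_atMost in auto)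
  show "suminf a \<le> B" by (rule suminf_le_const[OF s bound])
qed

definition nrm1 :: "hardy \<Rightarrow> real" where
  "nrm1 f = (\<Sum>n. norm (f n))"

abbreviation l1 :: "hardy \<Rightarrow> bool" where
  "l1 f \<equiv> summable (\<lambda>n. norm (f n))"

lemma nrm1_nonneg: "l1 f \<Longrightarrow> nrm1 f \<ge> 0"
  unfolding nrm1_def by (simp add: suminf_nonneg)

lemma l1_le_nrm1: "l1 f \<Longrightarrow> norm (f n) \<le> nrm1 f"
  unfolding nrm1_def by (rule term_le_suminf) simp_all

lemma l1_shift:
  assumes "l1 f"
  shows "l1 (\<lambda>k. f (c + k))" and "nrm1 (\<lambda>k. f (c + k)) \<le> nrm1 f"
  using tail_le_suminf[OF assms, of c] unfolding nrm1_def by simp_all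

lemma l1_finite_support:
  assumes "\<And>n. N \<le> n \<Longrightarrow> f n = 0"
  shows "l1 f"
  by (rule summable_finite[of "{..<N}"]) (use assms in auto)

lemma l1_lincomb:
  assumes a: "l1 a" and b: "l1 b"
  shows "l1 (\<lambda>m. a m + c * b m)" and "nrm1 (\<lambda>m. a m + c * b m) \<le> nrm1 a + norm c * nrm1 b"
proof -
  have s: "summable (\<lambda>m. norm (a m) + norm c * norm (b m))"
    using a b by (intro summable_add summable_mult)
  have le: "norm (a m + c * b m) \<le> norm (a m) + norm c * norm (b m)" for m
    using norm_triangle_ineq[of "a m" "c * b m"] by (simp add: norm_mult)
  show l: "l1 (\<lambda>m. a m + c * b m)"
    by (rule summable_comparison_test'[OF s, where N=0]) (use le in simp)
  have "nrm1 (\<lambda>m. a m + c * b m) \<le> (\<Sum>m. norm (a m) + norm c * norm (b m))"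
    unfolding nrm1_def by (rule suminf_le[OF le l s])
  also have "\<dots> = nrm1 a + norm c * nrm1 b"
    unfolding nrm1_def using a b by (simp add: suminf_add[symmetric] suminf_mult)
  finally show "nrm1 (\<lambda>m. a m + c * b m) \<le> nrm1 a + norm c * nrm1 b" .
qed

lemma l1_times_bounded:
  assumes f: "l1 f" and g: "\<And>k. norm (g k) \<le> B"
  shows "summable (\<lambda>k. norm (f k * g k))" and "summable (\<lambda>k. f k * g k)"
    and "(\<Sum>k. norm (f k * g k)) \<le> B * nrm1 f"
proof -
  have le: "norm (f k * g k) \<le> B * norm (f k)" for k
    using mult_left_mono[OF g[of k] norm_ge_zero[of "f k"]] by (simp add: norm_mult mult.commute)
  show s: "summable (\<lambda>k. norm (f k * g k))"
    by (rule summable_comparison_test'[OF summable_mult[OF f, of B], where N=0]) (use le in simp)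
  then show "summable (\<lambda>k. f k * g k)" by (rule summable_norm_cancel)
  have "(\<Sum>k. norm (f k * g k)) \<le> (\<Sum>k. B * norm (f k))"
    by (rule suminf_le[OF le s summable_mult[OF f]])
  then show "(\<Sum>k. norm (f k * g k)) \<le> B * nrm1 f" unfolding nrm1_def using f by (simp add: suminf_mult)
qed

lemma bound_nonneg: "(\<And>k. norm (g k) \<le> B) \<Longrightarrow> B \<ge> (0::real)"
  using order_trans[OF norm_ge_zero] by blast

lemma l2_bounded:
  assumes "summable (\<lambda>n. (norm (f n))^2)"
  shows "norm (f n) \<le> sqrt (\<Sum>n. (norm (f n))^2)"
proof -
  have "(norm (f n))^2 \<le> (\<Sum>n. (norm (f n))^2)" by (rule term_le_suminf[OF assms]) simp
  then show ?thesis by (metis real_le_rsqrt)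
qed

lemma in_Hs0_iff: "in_Hs 0 f \<longleftrightarrow> summable (\<lambda>n. (norm (f n))^2)"
  unfolding in_Hs_def by simp

lemma one_h_L2: "L2plus one_h"
  unfolding in_Hs0_iff by (rule summable_finite[of "{0}"]) (auto simp: one_h_def)

text \<open>For \<open>s > 1/2\<close> the space \<open>H\<^sup>s\<close> embeds into \<open>\<ell>\<^sup>1\<close>: by
  \<open>2|f\<^sub>n| \<le> (1+n)\<^sup>2\<^sup>s|f\<^sub>n|\<^sup>2 + (1+n)\<^sup>-\<^sup>2\<^sup>s\<close> and \<open>\<Sum>(1+n)\<^sup>-\<^sup>2\<^sup>s < \<infinity>\<close>.\<close>

lemma summable_powr_shift:
  assumes "a < -1"
  shows "summable (\<lambda>n. (1 + real n) powr a)"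
proof -
  have "summable (\<lambda>n. real n powr a)" using assms by (simp add: summable_real_powr_iff)
  then have "summable (\<lambda>n. real (n + 1) powr a)" by (subst summable_iff_shift)
  then show ?thesis by (simp add: add.commute)
qed

lemma Hs_l1:
  assumes s: "s > 1/2" and f: "in_Hs s f"
  shows "l1 f"
proof (rule summable_comparison_test'[where N=0])
  let ?g = "\<lambda>n. ((1 + real n) powr (2 * s)) * (norm (f n))^2 + (1 + real n) powr (-2 * s)"
  show "summable ?g"
    using f summable_powr_shift[of "-2 * s"] s unfolding in_Hs_def by (intro summable_add) auto
  fix n :: nat
  define t where "t = (1 + real n) powr s"
  have t: "t > 0" unfolding t_def by simp
  have e1: "(1 + real n) powr (2 * s) = t^2"
    unfolding t_def by (simp add: power2_eq_square powr_add[symmetric])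
  have e2: "(1 + real n) powr (-2 * s) = 1 / t^2"
    using e1 by (simp add: powr_minus[of _ "2 * s", simplified] divide_inverse)
  have "0 \<le> (t * norm (f n) - 1/t)^2" by simp
  then have "2 * norm (f n) \<le> t^2 * (norm (f n))^2 + 1/t^2"
    using t by (simp add: power2_eq_square field_simps)
  then show "norm (norm (f n)) \<le> ?g n" using e1 e2 norm_ge_zero[of "f n"] by (simp; linarith)
qed

lemma Hs_l2:
  assumes s: "s \<ge> 0" and f: "in_Hs s f"
  shows "summable (\<lambda>n. (norm (f n))^2)"
proof (rule summable_comparison_test'[where N=0])
  show "summable (\<lambda>n. ((1 + real n) powr (2 * s)) * (norm (f n))^2)" using f unfolding in_Hs_def .
  fix n :: nat
  have "1 \<le> (1 + real n) powr (2 * s)" using s by (intro ge_one_powr_ge_zero) auto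
  then show "norm ((norm (f n))^2) \<le> ((1 + real n) powr (2 * s)) * (norm (f n))^2"
    by (simp add: mult_le_cancel_right1)
qed

lemma in_Hs_lincomb:
  assumes a: "in_Hs s a" and b: "in_Hs s b"
  shows "in_Hs s (\<lambda>m. \<alpha> * a m + \<beta> * b m)"
proof -
  let ?W = "\<lambda>n. (1 + real n) powr (2 * s)"
  have le: "?W n * (norm (\<alpha> * a n + \<beta> * b n))^2
      \<le> (2 * (norm \<alpha>)^2) * (?W n * (norm (a n))^2) + (2 * (norm \<beta>)^2) * (?W n * (norm (b n))^2)" for n
  proof -
    have "(norm (\<alpha> * a n + \<beta> * b n))^2 \<le> (norm \<alpha> * norm (a n) + norm \<beta> * norm (b n))^2"
      using norm_triangle_ineq[of "\<alpha> * a n" "\<beta> * b n"] by (intro power_mono) (simp_all add: norm_mult)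
    also have "\<dots> \<le> 2 * (norm \<alpha> * norm (a n))^2 + 2 * (norm \<beta> * norm (b n))^2"
    proof -
      have "0 \<le> (norm \<alpha> * norm (a n) - norm \<beta> * norm (b n))^2" by simp
      then show ?thesis by (simp add: power2_eq_square algebra_simps)
    qed
    finally have "?W n * (norm (\<alpha> * a n + \<beta> * b n))^2
        \<le> ?W n * (2 * (norm \<alpha> * norm (a n))^2 + 2 * (norm \<beta> * norm (b n))^2)"
      by (rule mult_left_mono) simp
    then show ?thesis by (simp add: algebra_simps)
  qed
  have "summable (\<lambda>n. (2 * (norm \<alpha>)^2) * (?W n * (norm (a n))^2) + (2 * (norm \<beta>)^2) * (?W n * (norm (b n))^2))"
    using a b unfolding in_Hs_def by (intro summable_add summable_mult)
  then show ?thesis unfolding in_Hs_def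
    by (rule summable_comparison_test'[where N=0]) (use le in simp)
qed
section \<open>Hankel operators with \<open>\<ell>\<^sup>1\<close> symbols\<close>

lemma hankel_summable:
  assumes u: "l1 u" and g: "\<And>k. norm (g k) \<le> B"
  shows "summable (\<lambda>k. norm (u (n + k) * cnj (g k)))" and "summable (\<lambda>k. u (n + k) * cnj (g k))"
  using l1_times_bounded(1,2)[OF l1_shift(1)[OF u], of "\<lambda>k. cnj (g k)" B] g by simp_all

lemma hankel_bound:
  assumes u: "l1 u" and g: "\<And>k. norm (g k) \<le> B"
  shows "norm (hankel u g n) \<le> B * nrm1 u"
proof -
  have "norm (hankel u g n) \<le> (\<Sum>k. norm (u (n + k) * cnj (g k)))"
    unfolding hankel_def by (rule summable_norm[OF hankel_summable(1)[OF u g]])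
  also have "\<dots> \<le> B * nrm1 (\<lambda>k. u (n + k))"
    using l1_times_bounded(3)[OF l1_shift(1)[OF u], of "\<lambda>k. cnj (g k)" B] g by simp
  also have "\<dots> \<le> B * nrm1 u" by (rule mult_left_mono[OF l1_shift(2)[OF u] bound_nonneg[OF g]])
  finally show ?thesis .
qed

lemma hankel_l1:
  assumes u: "l1 u" and g: "l1 g"
  shows "l1 (hankel u g)" and "nrm1 (hankel u g) \<le> nrm1 u * nrm1 g"
proof -
  have gb: "\<And>k. norm (g k) \<le> nrm1 g" using l1_le_nrm1[OF g] .
  have row: "summable (\<lambda>k. norm (u (n + k)) * norm (g k))" for n
    using hankel_summable(1)[OF u gb, of n] by (simp add: norm_mult)
  have partial: "(\<Sum>n<N. norm (hankel u g n)) \<le> nrm1 u * nrm1 g" for N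
  proof -
    have "(\<Sum>n<N. norm (hankel u g n)) \<le> (\<Sum>n<N. \<Sum>k. norm (u (n + k)) * norm (g k))"
      unfolding hankel_def
      by (rule sum_mono, rule order_trans[OF summable_norm]) (use row hankel_summable(1)[OF u gb] in \<open>simp_all add: norm_mult\<close>)
    also have "\<dots> = (\<Sum>k. \<Sum>n<N. norm (u (n + k)) * norm (g k))"
      by (rule suminf_sum[symmetric]) (use row in simp)
    also have "\<dots> = (\<Sum>k. (\<Sum>n<N. norm (u (n + k))) * norm (g k))"
      by (simp add: sum_distrib_right)
    also have "\<dots> \<le> (\<Sum>k. nrm1 u * norm (g k))"
    proof (rule suminf_le)
      show "summable (\<lambda>k. (\<Sum>n<N. norm (u (n + k))) * norm (g k))"
        unfolding sum_distrib_right by (rule summable_sum) (use row in simp)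
      show "summable (\<lambda>k. nrm1 u * norm (g k))" using g by (rule summable_mult)
      fix k
      have "(\<Sum>n<N. norm (u (n + k))) \<le> nrm1 u"
        using sum_le_suminf[OF l1_shift(1)[OF u, of k], of "{..<N}"] l1_shift(2)[OF u, of k]
        by (simp add: nrm1_def add.commute)
      then show "(\<Sum>n<N. norm (u (n + k))) * norm (g k) \<le> nrm1 u * norm (g k)"
        by (rule mult_right_mono) simp
    qed
    also have "\<dots> = nrm1 u * nrm1 g" unfolding nrm1_def[of g] using g by (rule suminf_mult)
    finally show ?thesis .
  qed
  show "l1 (hankel u g)" and "nrm1 (hankel u g) \<le> nrm1 u * nrm1 g"
    using nonneg_series_bounded_partial_sums[OF norm_ge_zero partial] unfolding nrm1_def by simp_all
qed

text \<open>A polynomial symbol \<open>p\<close> gives a finite rank \<open>H\<^sub>p\<close>: its range consists of polynomials.\<close>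

lemma hankel_finite_symbol:
  assumes "\<And>m. N \<le> m \<Longrightarrow> p m = 0" and "N \<le> n"
  shows "hankel p g n = 0"
  unfolding hankel_def using assms by simp

lemma hankel_linear_symbol:
  assumes a: "l1 a" and b: "l1 b" and g: "\<And>k. norm (g k) \<le> B"
  shows "hankel (\<lambda>m. \<alpha> * a m + \<beta> * b m) g n = \<alpha> * hankel a g n + \<beta> * hankel b g n"
proof -
  note sa = hankel_summable(2)[OF a g, of n] and sb = hankel_summable(2)[OF b g, of n]
  have "hankel (\<lambda>m. \<alpha> * a m + \<beta> * b m) g n
      = (\<Sum>k. \<alpha> * (a (n + k) * cnj (g k)) + \<beta> * (b (n + k) * cnj (g k)))"
    unfolding hankel_def by (simp add: distrib_right mult.assoc)
  also have "\<dots> = \<alpha> * hankel a g n + \<beta> * hankel b g n"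
    unfolding hankel_def
    by (subst suminf_add[OF summable_mult[OF sa] summable_mult[OF sb], symmetric]) (simp add: suminf_mult[OF sa] suminf_mult[OF sb])
  finally show ?thesis .
qed

lemma hankel_antilinear_arg:
  assumes u: "l1 u" and f: "\<And>k. norm (f k) \<le> Bf" and g: "\<And>k. norm (g k) \<le> Bg"
  shows "hankel u (\<lambda>m. \<alpha> * f m + \<beta> * g m) n = cnj \<alpha> * hankel u f n + cnj \<beta> * hankel u g n"
proof -
  note sf = hankel_summable(2)[OF u f, of n] and sg = hankel_summable(2)[OF u g, of n]
  have "hankel u (\<lambda>m. \<alpha> * f m + \<beta> * g m) n
      = (\<Sum>k. cnj \<alpha> * (u (n + k) * cnj (f k)) + cnj \<beta> * (u (n + k) * cnj (g k)))"
    unfolding hankel_def by (simp add: distrib_left mult.left_commute)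
  also have "\<dots> = cnj \<alpha> * hankel u f n + cnj \<beta> * hankel u g n"
    unfolding hankel_def
    by (subst suminf_add[OF summable_mult[OF sf] summable_mult[OF sg], symmetric]) (simp add: suminf_mult[OF sf] suminf_mult[OF sg])
  finally show ?thesis .
qed

lemma Tz_bound: "(\<And>k. norm (h k) \<le> B) \<Longrightarrow> norm (Tz h k) \<le> B"
  unfolding Tz_def using bound_nonneg by (cases k) auto

lemma Kop_eq_hankel:
  assumes u: "l1 u" and h: "\<And>k. norm (h k) \<le> B"
  shows "Kop u h n = hankel u h (Suc n)"
proof -
  let ?f = "\<lambda>k. u (n + k) * cnj (Tz h k)"
  have Tzb: "\<And>k. norm (Tz h k) \<le> B" by (rule Tz_bound[OF h])
  have split: "(\<Sum>k. ?f (Suc k)) = suminf ?f - ?f 0"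
    by (rule suminf_split_head[OF hankel_summable(2)[OF u Tzb]])
  have "?f 0 = 0" by (simp add: Tz_def)
  with split have "Kop u h n = (\<Sum>k. ?f (Suc k))" unfolding Kop_def hankel_def by simp
  also have "\<dots> = hankel u h (Suc n)" unfolding hankel_def by (simp add: Tz_def)
  finally show ?thesis .
qed

lemma Kop_antilinear_arg:
  assumes u: "l1 u" and f: "\<And>k. norm (f k) \<le> Bf" and g: "\<And>k. norm (g k) \<le> Bg"
  shows "Kop u (\<lambda>m. \<alpha> * f m + \<beta> * g m) n = cnj \<alpha> * Kop u f n + cnj \<beta> * Kop u g n"
proof -
  have "Tz (\<lambda>m. \<alpha> * f m + \<beta> * g m) = (\<lambda>m. \<alpha> * Tz f m + \<beta> * Tz g m)"
    by (rule ext) (simp add: Tz_def)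
  then show ?thesis
    unfolding Kop_def using hankel_antilinear_arg[OF u Tz_bound[OF f] Tz_bound[OF g]] by simp
qed

text \<open>Symmetry of the Hankel form, \<open>(H\<^sub>u h | a) = (H\<^sub>u a | h)\<close>, in coefficients and with
  the symbol shifted by \<open>N\<close>.\<close>

lemma hankel_symmetric:
  assumes u: "l1 u" and a: "l1 a" and h: "\<And>k. norm (h k) \<le> B"
  shows "(\<Sum>m. cnj (a m) * hankel u h (N + m)) = (\<Sum>k. cnj (h k) * hankel u a (N + k))"
proof -
  have B0: "B \<ge> 0" by (rule bound_nonneg[OF h])
  define g where "g m k = norm (a m) * B * norm (u (N + m + k))" for m k
  have le: "norm (cnj (a m) * (u (N + m + k) * cnj (h k))) \<le> g m k" for m k
    unfolding g_def using mult_left_mono[OF h[of k], of "norm (a m) * norm (u (N + m + k))"]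
    by (simp add: norm_mult ac_simps)
  have rows: "summable (g m)" for m
    unfolding g_def using l1_shift(1)[OF u, of "N + m"] by (intro summable_mult)
  have g0: "g m k \<ge> 0" for m k unfolding g_def using B0 by simp
  have row_bound: "suminf (g m) \<le> norm (a m) * (B * nrm1 u)" for m
    unfolding g_def using l1_shift[OF u, of "N + m"] B0
    by (subst suminf_mult) (auto simp: nrm1_def mult.assoc intro!: mult_left_mono)
  have row_sums: "summable (\<lambda>m. suminf (g m))"
  proof (rule summable_comparison_test'[OF summable_mult2[OF a, of "B * nrm1 u"], where N=0])
    fix m show "norm (suminf (g m)) \<le> norm (a m) * (B * nrm1 u)"
      using row_bound[of m] suminf_nonneg[OF rows g0] by simp
  qed
  have "cnj (a m) * hankel u h (N + m) = (\<Sum>k. cnj (a m) * (u (N + m + k) * cnj (h k)))" for m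
    unfolding hankel_def by (rule suminf_mult[OF hankel_summable(2)[OF u h], symmetric])
  then have "(\<Sum>m. cnj (a m) * hankel u h (N + m)) = (\<Sum>m. \<Sum>k. cnj (a m) * (u (N + m + k) * cnj (h k)))"
    by simp
  also have "\<dots> = (\<Sum>k. \<Sum>m. cnj (a m) * (u (N + m + k) * cnj (h k)))"
    by (rule suminf_swap[OF le rows row_sums])
  also have "\<dots> = (\<Sum>k. cnj (h k) * hankel u a (N + k))"
  proof -
    have "(\<Sum>m. cnj (a m) * (u (N + m + k) * cnj (h k))) = (\<Sum>m. cnj (h k) * (u (N + k + m) * cnj (a m)))" for k
      by (simp only: ac_simps)
    also have "\<dots> k = cnj (h k) * hankel u a (N + k)" for k
      unfolding hankel_def by (rule suminf_mult[OF hankel_summable(2)[OF u l1_le_nrm1[OF a]]])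
    finally show ?thesis by simp
  qed
  finally show ?thesis .
qed
section \<open>Multiplication by an \<open>\<ell>\<^sup>1\<close> function and its adjoint \<open>\<Pi>(a\<^sup>* \<cdot>)\<close>\<close>

lemma hmult_bound:
  assumes a: "l1 a" and P: "\<And>k. norm (P k) \<le> C"
  shows "norm (hmult a P k) \<le> nrm1 a * C"
proof -
  have "norm (hmult a P k) \<le> (\<Sum>j\<le>k. norm (a j) * C)"
    unfolding hmult_def
    by (rule order_trans[OF norm_sum sum_mono]) (simp add: norm_mult mult_left_mono P)
  also have "\<dots> \<le> nrm1 a * C"
    unfolding nrm1_def sum_distrib_right[symmetric]
    by (rule mult_right_mono[OF sum_le_suminf[OF a] bound_nonneg[OF P]]) auto
  finally show ?thesis .
qed

lemma hmult_l1:
  assumes a: "l1 a" and b: "l1 b"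
  shows "l1 (hmult a b)"
proof (rule summable_comparison_test'[where N=0])
  show "summable (\<lambda>k. \<Sum>i\<le>k. norm (a i) * norm (b (k - i)))"
    by (rule summable_Cauchy_product) (use a b in simp_all)
  fix k
  show "norm (norm (hmult a b k)) \<le> (\<Sum>i\<le>k. norm (a i) * norm (b (k - i)))"
    unfolding hmult_def using norm_sum[of "\<lambda>i. a i * b (k - i)" "{..k}"] by (simp add: norm_mult)
qed

lemma Pi_conj_mult_summable:
  assumes a: "l1 a" and h: "\<And>k. norm (h k) \<le> B"
  shows "summable (\<lambda>m. cnj (a m) * h (p + m))" and "norm (Pi_conj_mult a h p) \<le> B * nrm1 a"
proof -
  have hb: "norm (h (p + m)) \<le> B" for m using h .
  show s: "summable (\<lambda>m. cnj (a m) * h (p + m))"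
    using l1_times_bounded(2)[of "\<lambda>m. cnj (a m)" "\<lambda>m. h (p + m)" B] a hb by simp
  have "norm (Pi_conj_mult a h p) \<le> (\<Sum>m. norm (cnj (a m) * h (p + m)))"
    unfolding Pi_conj_mult_def
    by (rule summable_norm) (use l1_times_bounded(1)[of "\<lambda>m. cnj (a m)" "\<lambda>m. h (p + m)" B] a hb in simp)
  also have "\<dots> \<le> B * nrm1 a"
    using l1_times_bounded(3)[of "\<lambda>m. cnj (a m)" "\<lambda>m. h (p + m)" B] a hb by (simp add: nrm1_def)
  finally show "norm (Pi_conj_mult a h p) \<le> B * nrm1 a" .
qed

lemma shifted_pairing_bound:
  assumes F: "\<And>k. norm (F k) \<le> B" and P: "\<And>k. norm (P k) \<le> C" and l1: "l1 F \<or> l1 P"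
  obtains M where "\<And>j. summable (\<lambda>p. norm (F (j + p)) * norm (P p))"
    and "\<And>j. (\<Sum>p. norm (F (j + p)) * norm (P p)) \<le> M"
  using l1
proof
  assume lF: "l1 F"
  show thesis
  proof
    fix j
    note prod = l1_times_bounded[OF l1_shift(1)[OF lF, of j] P]
    show "summable (\<lambda>p. norm (F (j + p)) * norm (P p))" using prod(1) by (simp add: norm_mult)
    have "(\<Sum>p. norm (F (j + p)) * norm (P p)) \<le> C * nrm1 (\<lambda>p. F (j + p))"
      using prod(3) by (simp add: norm_mult)
    also have "\<dots> \<le> C * nrm1 F" by (rule mult_left_mono[OF l1_shift(2)[OF lF] bound_nonneg[OF P]])
    finally show "(\<Sum>p. norm (F (j + p)) * norm (P p)) \<le> C * nrm1 F" .
  qed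
next
  assume lP: "l1 P"
  show thesis
  proof
    fix j
    note prod = l1_times_bounded[OF lP, of "\<lambda>p. F (j + p)" B]
    show "summable (\<lambda>p. norm (F (j + p)) * norm (P p))" using prod(1) F by (simp add: norm_mult mult.commute)
    show "(\<Sum>p. norm (F (j + p)) * norm (P p)) \<le> B * nrm1 P" using prod(3) F by (simp add: norm_mult mult.commute)
  qed
qed

text \<open>Adjointness \<open>(F | a P) = (\<Pi>(a\<^sup>* F) | P)\<close>: the adjoint of multiplication by \<open>a\<close> is the
  Toeplitz operator with symbol \<open>a\<^sup>*\<close>.\<close>

lemma mult_adjoint:
  assumes a: "l1 a" and F: "\<And>k. norm (F k) \<le> B" and P: "\<And>k. norm (P k) \<le> C" and l1: "l1 F \<or> l1 P"
  shows "(\<Sum>k. F k * cnj (hmult a P k)) = (\<Sum>p. Pi_conj_mult a F p * cnj (P p))"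
proof -
  obtain M where FP: "\<And>j. summable (\<lambda>p. norm (F (j + p)) * norm (P p))"
    and FPM: "\<And>j. (\<Sum>p. norm (F (j + p)) * norm (P p)) \<le> M"
    using shifted_pairing_bound[OF F P l1] by blast
  define G where "G j p = norm (a j) * (norm (F (j + p)) * norm (P p))" for j p
  define T where "T j p = F (j + p) * (cnj (a j) * cnj (P p))" for j p
  have le: "norm (T j p) \<le> G j p" for j p unfolding T_def G_def by (simp add: norm_mult)
  have rows: "summable (G j)" for j unfolding G_def by (rule summable_mult[OF FP])
  have row_sums: "summable (\<lambda>j. suminf (G j))"
  proof (rule summable_comparison_test'[OF summable_mult2[OF a, of M], where N=0])
    fix j
    have "suminf (G j) = norm (a j) * (\<Sum>p. norm (F (j + p)) * norm (P p))"
      unfolding G_def by (rule suminf_mult[OF FP])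
    then show "norm (suminf (G j)) \<le> norm (a j) * M"
      using FPM[of j] suminf_nonneg[OF FP, of j] by (simp add: mult_left_mono)
  qed
  have "(\<Sum>k. F k * cnj (hmult a P k)) = (\<Sum>k. \<Sum>j\<le>k. F k * (cnj (a j) * cnj (P (k - j))))"
    unfolding hmult_def by (simp add: sum_distrib_left)
  also have "\<dots> = (\<Sum>j. \<Sum>p. F (j + p) * (cnj (a j) * cnj (P (j + p - j))))"
    by (rule suminf_triangle[where G=G]) (use le rows row_sums in \<open>simp_all add: T_def\<close>)
  also have "\<dots> = (\<Sum>j. \<Sum>p. T j p)" unfolding T_def by simp
  also have "\<dots> = (\<Sum>p. \<Sum>j. T j p)" by (rule suminf_swap[OF le rows row_sums])
  also have "\<dots> = (\<Sum>p. Pi_conj_mult a F p * cnj (P p))"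
  proof -
    have "(\<Sum>j. T j p) = (\<Sum>j. cnj (a j) * F (p + j)) * cnj (P p)" for p
    proof -
      have s: "summable (\<lambda>m. cnj (a m) * F (p + m))" by (rule Pi_conj_mult_summable(1)[OF a F])
      have "(\<Sum>j. T j p) = (\<Sum>j. (cnj (a j) * F (p + j)) * cnj (P p))"
        unfolding T_def by (simp add: ac_simps)
      also have "\<dots> = (\<Sum>j. cnj (a j) * F (p + j)) * cnj (P p)" by (rule suminf_mult2[OF s, symmetric])
      finally show ?thesis .
    qed
    then show ?thesis unfolding Pi_conj_mult_def by simp
  qed
  finally show ?thesis .
qed
section \<open>Coefficient expansions of \<open>a\<Pi>(a\<^sup>*K\<^sub>uh)\<close> and \<open>K\<^sub>u(a\<Pi>(a\<^sup>*h))\<close>\<close>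

text \<open>Both compositions appearing in the commutator \<open>[C\<^sub>u\<^sup>x, K\<^sub>u]\<close> are written as series
  \<open>\<Sum>\<^sub>k \<kappa>\<^sub>k h\<^sub>k\<^sup>*\<close> with explicit kernels \<open>\<kappa>\<close>; the commutator identity then becomes an
  identity between kernels.\<close>

lemma suminf_cnj:
  assumes "summable f"
  shows "(\<Sum>n. cnj (f n)) = cnj (\<Sum>n. f n)"
  using sums_cnj[of f "suminf f"] assms by (simp add: summable_sums sums_iff)

lemma suminf_add_scaled:
  fixes f g :: "nat \<Rightarrow> complex"
  assumes "summable f" "summable g"
  shows "suminf f + c * suminf g = (\<Sum>k. f k + c * g k)" and "summable (\<lambda>k. f k + c * g k)"
  using suminf_add[OF assms(1) summable_mult[OF assms(2)]] suminf_mult[OF assms(2)]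
    summable_add[OF assms(1) summable_mult[OF assms(2)]] by simp_all

lemma Pi_conj_mult_Kop:
  assumes a: "l1 a" and u: "l1 u" and h: "\<And>k. norm (h k) \<le> B"
  shows "Pi_conj_mult a (Kop u h) p = (\<Sum>k. cnj (h k) * hankel u a (Suc p + k))"
proof -
  have "Pi_conj_mult a (Kop u h) p = (\<Sum>m. cnj (a m) * hankel u h (Suc p + m))"
    unfolding Pi_conj_mult_def by (simp add: Kop_eq_hankel[OF u h])
  also have "\<dots> = (\<Sum>k. cnj (h k) * hankel u a (Suc p + k))" by (rule hankel_symmetric[OF u a h])
  finally show ?thesis .
qed

lemma hmult_Pi_Kop:
  assumes a: "l1 a" and u: "l1 u" and h: "\<And>k. norm (h k) \<le> B"
  shows "hmult a (Pi_conj_mult a (Kop u h)) n = (\<Sum>k. (\<Sum>j\<le>n. a j * hankel u a (Suc (n - j) + k)) * cnj (h k))"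
    and "summable (\<lambda>k. (\<Sum>j\<le>n. a j * hankel u a (Suc (n - j) + k)) * cnj (h k))"
proof -
  define t where "t j k = hankel u a (Suc (n - j) + k) * cnj (h k)" for j k
  have s: "summable (t j)" for j
    unfolding t_def by (rule hankel_summable(2)[where g=h, OF hankel_l1(1)[OF u a] h])
  have "hmult a (Pi_conj_mult a (Kop u h)) n = (\<Sum>j\<le>n. a j * suminf (t j))"
    unfolding hmult_def Pi_conj_mult_Kop[OF a u h] t_def by (simp add: mult.commute)
  also have "\<dots> = (\<Sum>j\<le>n. \<Sum>k. a j * t j k)" by (simp add: suminf_mult[OF s])
  also have "\<dots> = (\<Sum>k. \<Sum>j\<le>n. a j * t j k)" by (rule suminf_sum[symmetric]) (use s in simp)
  finally show "hmult a (Pi_conj_mult a (Kop u h)) n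
      = (\<Sum>k. (\<Sum>j\<le>n. a j * hankel u a (Suc (n - j) + k)) * cnj (h k))"
    unfolding t_def by (simp add: sum_distrib_right mult.assoc)
  show "summable (\<lambda>k. (\<Sum>j\<le>n. a j * hankel u a (Suc (n - j) + k)) * cnj (h k))"
  proof -
    have "summable (\<lambda>k. \<Sum>j\<le>n. a j * t j k)" by (rule summable_sum) (rule summable_mult[OF s])
    then show ?thesis unfolding t_def by (simp add: sum_distrib_right mult.assoc)
  qed
qed

text \<open>Expansion of \<open>K\<^sub>u (a \<Pi>(a\<^sup>* h))\<close>, obtained by moving the multiplication
  by \<open>a\<close> and its adjoint across the pairing with \<open>h\<close>.\<close>

lemma Kop_hmult_Pi:
  fixes n :: nat
  assumes a: "l1 a" and u: "l1 u" and h: "\<And>k. norm (h k) \<le> B"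
  defines "V \<equiv> \<lambda>p. hankel u a (Suc n + p)"
  shows "Kop u (hmult a (Pi_conj_mult a h)) n = (\<Sum>k. hmult a V k * cnj (h k))"
    and "summable (\<lambda>k. hmult a V k * cnj (h k))"
proof -
  let ?P = "Pi_conj_mult a h"
  have Pb: "\<And>p. norm (?P p) \<le> B * nrm1 a" by (rule Pi_conj_mult_summable(2)[OF a h])
  have ub: "\<And>k. norm (u (Suc n + k)) \<le> nrm1 u" by (rule l1_le_nrm1[OF u])
  have lV: "l1 V" unfolding V_def by (rule l1_shift(1)[OF hankel_l1(1)[OF u a]])
  have Pi_shift: "Pi_conj_mult a (\<lambda>k. u (Suc (n + k))) p = V p" for p
    unfolding Pi_conj_mult_def V_def hankel_def by (simp add: ac_simps)
  have sH: "summable (\<lambda>k. cnj (hmult a V k) * h k)"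
    by (rule l1_times_bounded(2)[where f="\<lambda>k. cnj (hmult a V k)" and g=h]) (use hmult_l1[OF a lV] h in simp_all)
  show "summable (\<lambda>k. hmult a V k * cnj (h k))"
    by (rule l1_times_bounded(2)[where g="\<lambda>k. cnj (h k)"]) (use hmult_l1[OF a lV] h in simp_all)
  have "Kop u (hmult a ?P) n = (\<Sum>k. u (Suc n + k) * cnj (hmult a ?P k))"
    unfolding Kop_eq_hankel[OF u hmult_bound[OF a Pb]] hankel_def ..
  also have "\<dots> = (\<Sum>p. V p * cnj (?P p))"
    using mult_adjoint[where F="\<lambda>k. u (Suc n + k)" and P="?P", OF a ub Pb] l1_shift(1)[OF u, of "Suc n"]
    by (simp add: Pi_shift)
  also have "\<dots> = cnj (\<Sum>p. ?P p * cnj (V p))"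
  proof -
    have "summable (\<lambda>p. cnj (V p) * ?P p)"
      by (rule l1_times_bounded(2)[where f="\<lambda>p. cnj (V p)" and g="?P"]) (use lV Pb in simp_all)
    then show ?thesis using suminf_cnj[of "\<lambda>p. ?P p * cnj (V p)"] by (simp add: mult.commute)
  qed
  also have "\<dots> = cnj (\<Sum>k. h k * cnj (hmult a V k))"
    using mult_adjoint[where F=h and P=V, OF a h l1_le_nrm1[OF lV]] lV by simp
  also have "\<dots> = (\<Sum>k. hmult a V k * cnj (h k))"
    using suminf_cnj[of "\<lambda>k. h k * cnj (hmult a V k)"] sH by (simp add: mult.commute)
  finally show "Kop u (hmult a ?P) n = (\<Sum>k. hmult a V k * cnj (h k))" .
qed
section \<open>The commutator identity \<open>[C\<^sub>u\<^sup>x, K\<^sub>u] = K\<^sub>u\<^sub>'\<close>\<close>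

lemma convolution_split:
  fixes f g :: "nat \<Rightarrow> complex"
  shows "(\<Sum>j\<le>n. f j * g (Suc (n - j) + k)) + (\<Sum>m\<le>k. g m * f (Suc n + (k - m)))
       = hmult f g (n + Suc k)"
proof -
  have low: "(\<Sum>j\<le>n. f j * g (Suc (n - j) + k)) = (\<Sum>j\<le>n. f j * g (n + Suc k - j))"
    by (rule sum.cong[OF refl]) (simp add: Suc_diff_le)
  have high: "(\<Sum>m\<le>k. g m * f (Suc n + (k - m))) = (\<Sum>j = Suc n..n + Suc k. f j * g (n + Suc k - j))"
    by (rule sum.reindex_bij_witness[where i="\<lambda>j. n + Suc k - j" and j="\<lambda>m. n + Suc k - m"])
      (auto simp: mult.commute Suc_diff_le)
  show ?thesis unfolding low high hmult_def by (rule sum_up_index_split[symmetric])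
qed

lemma hmult_commute: "hmult g f N = hmult f g N"
  for f g :: hardy
  unfolding hmult_def
  by (rule sum.reindex_bij_witness[where i="\<lambda>j. N - j" and j="\<lambda>j. N - j"]) (auto simp: mult.commute)

text \<open>The four kernels of \<open>[C\<^sub>u\<^sup>x, K\<^sub>u]\<close> add up to twice the kernel of \<open>K\<^sub>w\<^sub>v\<close>. The only
  input is the equation \<open>x H\<^sub>u\<^sup>2 w = w - 1\<close>, i.e. \<open>x H\<^sub>u v = w\<close> away from the constant term,
  where \<open>v = H\<^sub>u w\<close>; here \<open>H = H\<^sub>u v\<close>.\<close>

lemma commutator_kernels:
  fixes w v H :: hardy and X :: complex
  assumes wH: "\<And>m. m \<noteq> 0 \<Longrightarrow> X * H m = w m"
  shows "(\<Sum>j\<le>n. w j * v (Suc (n - j) + k)) + X * (\<Sum>j\<le>n. v j * H (Suc (n - j) + k))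
       + hmult w (\<lambda>p. v (Suc n + p)) k + X * hmult v (\<lambda>p. H (Suc n + p)) k
       = 2 * hmult w v (n + Suc k)"
proof -
  have XB: "X * (\<Sum>j\<le>n. v j * H (Suc (n - j) + k)) = (\<Sum>j\<le>n. v j * w (Suc (n - j) + k))"
    unfolding sum_distrib_left by (rule sum.cong[OF refl]) (simp add: wH mult.left_commute)
  have XD: "X * hmult v (\<lambda>p. H (Suc n + p)) k = (\<Sum>m\<le>k. v m * w (Suc n + (k - m)))"
    unfolding hmult_def sum_distrib_left by (rule sum.cong[OF refl]) (simp add: wH mult.left_commute)
  have "(\<Sum>j\<le>n. w j * v (Suc (n - j) + k)) + X * (\<Sum>j\<le>n. v j * H (Suc (n - j) + k))
       + hmult w (\<lambda>p. v (Suc n + p)) k + X * hmult v (\<lambda>p. H (Suc n + p)) k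
      = ((\<Sum>j\<le>n. w j * v (Suc (n - j) + k)) + (\<Sum>m\<le>k. v m * w (Suc n + (k - m))))
       + ((\<Sum>j\<le>n. v j * w (Suc (n - j) + k)) + (\<Sum>m\<le>k. w m * v (Suc n + (k - m))))"
    unfolding XB XD by (simp add: hmult_def algebra_simps)
  also have "\<dots> = hmult w v (n + Suc k) + hmult v w (n + Suc k)"
    by (simp only: convolution_split)
  finally show ?thesis by (simp add: hmult_commute[of v w])
qed

lemma Kop_of_C_form:
  fixes x :: real
  assumes u: "l1 u" and w: "l1 w" and v: "l1 v" and h: "\<And>k. norm (h k) \<le> B"
  shows "Kop u (\<lambda>m. c * (hmult w (Pi_conj_mult w h) m + x * hmult v (Pi_conj_mult v h) m)) n
       = cnj c * (Kop u (hmult w (Pi_conj_mult w h)) n + x * Kop u (hmult v (Pi_conj_mult v h)) n)"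
proof -
  have Yw: "\<And>m. norm (hmult w (Pi_conj_mult w h) m) \<le> nrm1 w * (B * nrm1 w)"
    by (rule hmult_bound[OF w Pi_conj_mult_summable(2)[OF w h]])
  have Yv: "\<And>m. norm (hmult v (Pi_conj_mult v h) m) \<le> nrm1 v * (B * nrm1 v)"
    by (rule hmult_bound[OF v Pi_conj_mult_summable(2)[OF v h]])
  show ?thesis
    using Kop_antilinear_arg[where f="hmult w (Pi_conj_mult w h)" and g="hmult v (Pi_conj_mult v h)"
        and \<alpha>=c and \<beta>="c * x" and n=n, OF u Yw Yv]
    by (simp add: algebra_simps)
qed

lemma Kop_scaled_symbol:
  assumes f: "l1 f" and h: "\<And>k. norm (h k) \<le> B"
  shows "Kop (\<lambda>m. a * f m) h n = a * (\<Sum>k. f (Suc n + k) * cnj (h k))"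
proof -
  have "l1 (\<lambda>m. a * f m)" using summable_mult[OF f, of "norm a"] by (simp add: norm_mult)
  from Kop_eq_hankel[where h=h, OF this h] show ?thesis
    unfolding hankel_def
    using suminf_mult[OF hankel_summable(2)[where g=h and n="Suc n", OF f h], of a] by (simp add: mult.assoc)
qed

text \<open>Both sides are expanded as
  series \<open>\<Sum>\<^sub>k \<kappa>\<^sub>k h\<^sub>k\<^sup>*\<close>, and the antilinearity of \<open>K\<^sub>u\<close> turns \<open>x/4i\<close> into its negative.\<close>

lemma commutator_identity:
  fixes x :: real
  assumes u: "l1 u" and w: "l1 w" and h: "\<And>k. norm (h k) \<le> B"
    and eq: "\<And>m. w m - complex_of_real x * hankel u (hankel u w) m = one_h m"
  defines "v \<equiv> hankel u w" and "c \<equiv> complex_of_real x / (4 * \<i>)"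
  shows "c * (hmult w (Pi_conj_mult w (Kop u h)) n + x * hmult v (Pi_conj_mult v (Kop u h)) n)
       - Kop u (\<lambda>m. c * (hmult w (Pi_conj_mult w h) m + x * hmult v (Pi_conj_mult v h) m)) n
       = Kop (\<lambda>m. complex_of_real x / (2 * \<i>) * hmult w v m) h n"
proof -
  let ?X = "complex_of_real x"
  have lv: "l1 v" unfolding v_def by (rule hankel_l1(1)[OF u w])
  have wH: "?X * hankel u v m = w m" if "m \<noteq> 0" for m
    using eq[of m] that unfolding v_def one_h_def by simp
  have hvh: "summable (\<lambda>k. hmult w v (Suc n + k) * cnj (h k))"
    by (rule hankel_summable(2)[where g=h, OF hmult_l1[OF w lv] h])
  have cc: "cnj c = - c" unfolding c_def by (simp add: complex_eq_iff)
  define A where "A k = (\<Sum>j\<le>n. w j * v (Suc (n - j) + k)) * cnj (h k)" for k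
  define Bk where "Bk k = (\<Sum>j\<le>n. v j * hankel u v (Suc (n - j) + k)) * cnj (h k)" for k
  define Ck where "Ck k = hmult w (\<lambda>p. v (Suc n + p)) k * cnj (h k)" for k
  define Dk where "Dk k = hmult v (\<lambda>p. hankel u v (Suc n + p)) k * cnj (h k)" for k
  note CKw = hmult_Pi_Kop[where n=n and h=h, OF w u h, folded v_def, folded A_def]
  note CKv = hmult_Pi_Kop[where n=n and h=h, OF lv u h, folded Bk_def]
  note KCw = Kop_hmult_Pi[where n=n and h=h, OF w u h, folded v_def, folded Ck_def]
  note KCv = Kop_hmult_Pi[where n=n and h=h, OF lv u h, folded Dk_def]
  have KC: "Kop u (\<lambda>m. c * (hmult w (Pi_conj_mult w h) m + ?X * hmult v (Pi_conj_mult v h) m)) n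
      = - c * (suminf Ck + ?X * suminf Dk)"
    unfolding Kop_of_C_form[OF u w lv h] KCw(1) KCv(1) cc ..
  have "c * (hmult w (Pi_conj_mult w (Kop u h)) n + ?X * hmult v (Pi_conj_mult v (Kop u h)) n)
       - Kop u (\<lambda>m. c * (hmult w (Pi_conj_mult w h) m + ?X * hmult v (Pi_conj_mult v h) m)) n
      = c * ((suminf A + ?X * suminf Bk) + (suminf Ck + ?X * suminf Dk))"
    unfolding KC CKw(1) CKv(1) by (simp add: algebra_simps)
  also have "\<dots> = c * (\<Sum>k. (A k + ?X * Bk k) + (Ck k + ?X * Dk k))"
    using suminf_add_scaled[OF CKw(2) CKv(2)] suminf_add_scaled[OF KCw(2) KCv(2)]
      suminf_add[OF suminf_add_scaled(2)[OF CKw(2) CKv(2)] suminf_add_scaled(2)[OF KCw(2) KCv(2)]]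
    by simp
  also have "\<dots> = c * (\<Sum>k. 2 * (hmult w v (Suc n + k) * cnj (h k)))"
  proof -
    have kernel: "(\<Sum>j\<le>n. w j * v (Suc (n - j) + k)) + ?X * (\<Sum>j\<le>n. v j * hankel u v (Suc (n - j) + k))
        + hmult w (\<lambda>p. v (Suc n + p)) k + ?X * hmult v (\<lambda>p. hankel u v (Suc n + p)) k
        = 2 * hmult w v (n + Suc k)" for k
      by (rule commutator_kernels[OF wH])
    have "(A k + ?X * Bk k) + (Ck k + ?X * Dk k) = 2 * (hmult w v (n + Suc k) * cnj (h k))" for k
      unfolding A_def Bk_def Ck_def Dk_def mult.assoc[symmetric] kernel[of k, symmetric]
      by (simp add: algebra_simps)
    then show ?thesis by simp
  qed
  also have "\<dots> = ?X / (2 * \<i>) * (\<Sum>k. hmult w v (Suc n + k) * cnj (h k))"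
    using suminf_mult[OF hvh, of 2] by (simp add: c_def)
  also have "\<dots> = Kop (\<lambda>m. ?X / (2 * \<i>) * hmult w v m) h n"
    by (rule Kop_scaled_symbol[OF hmult_l1[OF w lv] h, symmetric])
  finally show ?thesis by simp
qed
section \<open>\<open>w = (I - xH\<^sub>u\<^sup>2)\<^sup>-\<^sup>1(1)\<close> lies in \<open>\<ell>\<^sup>1\<close>\<close>

text \<open>\<open>\<ell>\<^sup>1\<close>-balls are closed under uniform limits: the partial sums of \<open>|w|\<close> are bounded by
  the common radius.\<close>

lemma l1_of_uniform_limit:
  fixes g :: "nat \<Rightarrow> hardy" and \<epsilon> :: "nat \<Rightarrow> real"
  assumes g: "\<And>k. l1 (g k)" "\<And>k. nrm1 (g k) \<le> R"
    and close: "\<And>k n. norm (w n - g k n) \<le> \<epsilon> k" and \<epsilon>: "\<epsilon> \<longlonglongrightarrow> 0"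
  shows "l1 w"
proof (rule nonneg_series_bounded_partial_sums(1)[OF norm_ge_zero])
  fix N
  have "(\<Sum>n<N. norm (w n)) \<le> R + real N * \<epsilon> k" for k
  proof -
    have "(\<Sum>n<N. norm (w n)) \<le> (\<Sum>n<N. norm (g k n) + \<epsilon> k)"
    proof (rule sum_mono)
      fix n show "norm (w n) \<le> norm (g k n) + \<epsilon> k"
        using close[where k=k and n=n] norm_triangle_ineq2[of "w n" "g k n"] by simp
    qed
    also have "\<dots> = (\<Sum>n<N. norm (g k n)) + real N * \<epsilon> k" by (simp add: sum.distrib)
    also have "(\<Sum>n<N. norm (g k n)) \<le> R"
      using g[of k] sum_le_suminf[of "\<lambda>n. norm (g k n)" "{..<N}"] unfolding nrm1_def by auto
    finally show ?thesis by simp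
  qed
  moreover have "(\<lambda>k. R + real N * \<epsilon> k) \<longlonglongrightarrow> R + real N * 0"
    by (intro tendsto_intros \<epsilon>)
  ultimately show "(\<Sum>n<N. norm (w n)) \<le> R" by (simp add: LIMSEQ_le_const)
qed

text \<open>A bounded fixed point \<open>w = f + Qw\<close> of an affine map whose linear part \<open>Q\<close> contracts both
  the sup-norm and the \<open>\<ell>\<^sup>1\<close>-norm by \<open>q < 1\<close> lies in \<open>\<ell>\<^sup>1\<close>: the Picard iterates \<open>g\<^sub>k\<close>
  starting at \<open>0\<close> stay in the \<open>\<ell>\<^sup>1\<close>-ball of radius \<open>\<parallel>f\<parallel>\<^sub>1/(1-q)\<close> and converge to \<open>w\<close>
  uniformly, at rate \<open>q\<^sup>k\<close>.\<close>

lemma l1_of_bounded_fixed_point: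
  fixes Q :: "hardy \<Rightarrow> hardy" and q M :: real
  assumes q: "0 \<le> q" "q < 1"
    and Q_sup: "\<And>g C n. (\<And>k. norm (g k) \<le> C) \<Longrightarrow> norm (Q g n) \<le> q * C"
    and Q_l1: "\<And>g. l1 g \<Longrightarrow> l1 (Q g) \<and> nrm1 (Q g) \<le> q * nrm1 g"
    and Q_diff: "\<And>g n. l1 g \<Longrightarrow> Q (\<lambda>m. w m - g m) n = Q w n - Q g n"
    and w: "\<And>k. norm (w k) \<le> M" and f: "l1 f" and fixed: "\<And>n. w n = f n + Q w n"
  shows "l1 w"
proof -
  define R where "R = nrm1 f / (1 - q)"
  have R: "nrm1 f + q * R = R" and R0: "R \<ge> 0"
    using q nrm1_nonneg[OF f] unfolding R_def by (simp_all add: field_simps)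
  define g where "g = rec_nat (\<lambda>_. 0) (\<lambda>k gk m. f m + Q gk m)"
  have g0: "g 0 = (\<lambda>_. 0)" and gS: "g (Suc k) = (\<lambda>m. f m + Q (g k) m)" for k
    unfolding g_def by simp_all
  have g_l1: "l1 (g k) \<and> nrm1 (g k) \<le> R" for k
  proof (induction k)
    case 0 then show ?case using R0 by (simp add: g0 nrm1_def)
  next
    case (Suc k)
    then have Qg: "l1 (Q (g k))" "nrm1 (Q (g k)) \<le> q * R"
      using Q_l1[of "g k"] mult_left_mono[of "nrm1 (g k)" R q] q by auto
    have "nrm1 (g (Suc k)) \<le> nrm1 f + q * R"
      using l1_lincomb(2)[OF f Qg(1), of 1] Qg(2) by (simp add: gS)
    then show ?case using l1_lincomb(1)[OF f Qg(1), of 1] R by (simp add: gS)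
  qed
  have close: "norm (w n - g k n) \<le> M * q^k" for k n
  proof (induction k arbitrary: n)
    case 0 then show ?case using w by (simp add: g0)
  next
    case (Suc k)
    have "w n - g (Suc k) n = Q (\<lambda>m. w m - g k m) n"
      using fixed[of n] Q_diff[of "g k" n] g_l1[of k] by (simp add: gS)
    also have "norm \<dots> \<le> q * (M * q^k)" by (rule Q_sup[OF Suc.IH])
    finally show ?case by (simp add: ac_simps)
  qed
  have "(\<lambda>k. M * q^k) \<longlonglongrightarrow> M * 0" using q by (intro tendsto_intros) simp
  then show ?thesis using l1_of_uniform_limit[of g R w "\<lambda>k. M * q^k"] g_l1 close by simp
qed

lemma hankel_square_contracts:
  fixes x :: real
  assumes r: "l1 r"
  defines "q \<equiv> \<bar>x\<bar> * (nrm1 r)^2"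
  shows "(\<And>k. norm (g k) \<le> C) \<Longrightarrow> norm (x * hankel r (hankel r g) n) \<le> q * C"
    and "l1 g \<Longrightarrow> l1 (\<lambda>m. x * hankel r (hankel r g) m) \<and> nrm1 (\<lambda>m. x * hankel r (hankel r g) m) \<le> q * nrm1 g"
    and "(\<And>k. norm (f k) \<le> Bf) \<Longrightarrow> (\<And>k. norm (g k) \<le> Bg) \<Longrightarrow>
      x * hankel r (hankel r (\<lambda>m. f m - g m)) n = x * hankel r (hankel r f) n - x * hankel r (hankel r g) n"
proof -
  have \<rho>0: "nrm1 r \<ge> 0" by (rule nrm1_nonneg[OF r])
  show "norm (x * hankel r (hankel r g) n) \<le> q * C" if g: "\<And>k. norm (g k) \<le> C"
  proof -
    have "norm (hankel r (hankel r g) n) \<le> (C * nrm1 r) * nrm1 r"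
      by (rule hankel_bound[OF r hankel_bound[OF r g]])
    then have "\<bar>x\<bar> * norm (hankel r (hankel r g) n) \<le> \<bar>x\<bar> * ((C * nrm1 r) * nrm1 r)"
      by (rule mult_left_mono) simp
    then show ?thesis unfolding q_def by (simp add: norm_mult power2_eq_square ac_simps)
  qed
  show "l1 (\<lambda>m. x * hankel r (hankel r g) m) \<and> nrm1 (\<lambda>m. x * hankel r (hankel r g) m) \<le> q * nrm1 g"
    if g: "l1 g"
  proof
    have l: "l1 (hankel r (hankel r g))" by (rule hankel_l1(1)[OF r hankel_l1(1)[OF r g]])
    then show "l1 (\<lambda>m. x * hankel r (hankel r g) m)" by (simp add: norm_mult summable_mult)
    have "nrm1 (hankel r (hankel r g)) \<le> nrm1 r * (nrm1 r * nrm1 g)"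
      using hankel_l1(2)[OF r hankel_l1(1)[OF r g]] mult_left_mono[OF hankel_l1(2)[OF r g] \<rho>0] by simp
    moreover have "nrm1 (\<lambda>m. x * hankel r (hankel r g) m) = \<bar>x\<bar> * nrm1 (hankel r (hankel r g))"
      unfolding nrm1_def using l by (simp add: norm_mult suminf_mult)
    ultimately show "nrm1 (\<lambda>m. x * hankel r (hankel r g) m) \<le> q * nrm1 g"
      unfolding q_def by (simp add: power2_eq_square mult_left_mono ac_simps)
  qed
  show "x * hankel r (hankel r (\<lambda>m. f m - g m)) n = x * hankel r (hankel r f) n - x * hankel r (hankel r g) n"
    if f: "\<And>k. norm (f k) \<le> Bf" and g: "\<And>k. norm (g k) \<le> Bg"
  proof -
    have diff: "hankel r (\<lambda>m. f' m - g' m) k = hankel r f' k - hankel r g' k"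
      if "\<And>k. norm (f' k) \<le> Bf'" "\<And>k. norm (g' k) \<le> Bg'" for f' g' Bf' Bg' k
      using hankel_antilinear_arg[where \<alpha>=1 and \<beta>="-1", OF r that] by simp
    have "hankel r (\<lambda>m. f m - g m) = (\<lambda>k. hankel r f k - hankel r g k)"
      by (rule ext, rule diff[OF f g])
    then show ?thesis
      using diff[where k=n, OF hankel_bound[OF r f] hankel_bound[OF r g]] by (simp add: right_diff_distrib)
  qed
qed

lemma l1_split_small_tail:
  assumes u: "l1 u" and \<epsilon>: "0 < \<epsilon>"
  obtains p r :: hardy and N :: nat
  where "u = (\<lambda>m. p m + r m)" and "\<And>m. N \<le> m \<Longrightarrow> p m = 0" and "l1 r" and "nrm1 r < \<epsilon>"
proof -
  obtain N where N: "norm (\<Sum>i. norm (u (i + N))) < \<epsilon>"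
    using suminf_exist_split[OF \<epsilon> u] by blast
  define r where "r m = (if N \<le> m then u m else 0)" for m
  have "l1 r" unfolding r_def by (rule summable_comparison_test'[OF u, where N=0]) simp
  moreover have "nrm1 r < \<epsilon>"
  proof -
    have "nrm1 r = (\<Sum>m. if N \<le> m then norm (u m) else 0)"
      unfolding nrm1_def r_def by (rule suminf_cong) auto
    also have "\<dots> = (\<Sum>i. norm (u (i + N)))"
      by (rule suminf_from) (rule summable_ignore_initial_segment[OF u])
    finally show ?thesis using N by simp
  qed
  moreover have "u = (\<lambda>m. (if m < N then u m else 0) + r m)" unfolding r_def by auto
  ultimately show thesis by (intro that[of "\<lambda>m. if m < N then u m else 0" r N]) auto
qed

lemma hankel_square_split:
  assumes p: "l1 p" and r: "l1 r" and w: "\<And>k. norm (w k) \<le> M"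
  defines "u \<equiv> \<lambda>m. p m + r m"
  shows "hankel u (hankel u w) n = hankel p (hankel u w) n + hankel r (hankel p w) n + hankel r (hankel r w) n"
proof -
  have u1: "u = (\<lambda>m. 1 * p m + 1 * r m)" unfolding u_def by simp
  have "l1 u" using l1_lincomb(1)[OF p r, of 1] unfolding u_def by simp
  then have ub: "\<And>k. norm (hankel u w k) \<le> M * nrm1 u" by (rule hankel_bound[OF _ w])
  have "hankel u (hankel u w) n = hankel p (hankel u w) n + hankel r (hankel u w) n"
    using hankel_linear_symbol[where \<alpha>=1 and \<beta>=1, OF p r ub] u1 by simp
  moreover have "hankel u w = (\<lambda>k. 1 * hankel p w k + 1 * hankel r w k)"
    using hankel_linear_symbol[where \<alpha>=1 and \<beta>=1, OF p r w] u1 by (intro ext) simp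
  moreover have "hankel r (\<lambda>k. 1 * hankel p w k + 1 * hankel r w k) n
      = hankel r (hankel p w) n + hankel r (hankel r w) n"
    using hankel_antilinear_arg[where \<alpha>=1 and \<beta>=1, OF r hankel_bound[OF p w] hankel_bound[OF r w]] by simp
  ultimately show ?thesis by simp
qed

text \<open>Write \<open>u = p + r\<close> with \<open>p\<close> a polynomial and
  \<open>|x| \<parallel>r\<parallel>\<^sub>1\<^sup>2 < 1\<close>. Then \<open>w = f + xH\<^sub>r\<^sup>2w\<close> with
  \<open>f = 1 + x(H\<^sub>pH\<^sub>uw + H\<^sub>rH\<^sub>pw) \<in> \<ell>\<^sup>1\<close> (\<open>H\<^sub>p\<close> has finite rank), and the contraction lemma
  applies to the bounded solution \<open>w \<in> \<ell>\<^sup>2\<close>.\<close>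

lemma inverse_in_l1:
  fixes x :: real
  assumes u: "l1 u" and w: "L2plus w"
    and eq: "\<And>m. w m - x * hankel u (hankel u w) m = one_h m"
  shows "l1 w"
proof -
  define \<epsilon> where "\<epsilon> = 1 / (\<bar>x\<bar> + 1)"
  have \<epsilon>: "0 < \<epsilon>" "\<epsilon> \<le> 1" "\<bar>x\<bar> * \<epsilon> < 1" unfolding \<epsilon>_def by (auto simp: field_simps)
  have "\<bar>x\<bar> * \<epsilon>^2 \<le> \<bar>x\<bar> * \<epsilon>"
    using \<epsilon> by (intro mult_left_mono) (simp_all add: power2_eq_square mult_right_le_one_le)
  with \<epsilon>(3) have \<epsilon>2: "\<bar>x\<bar> * \<epsilon>^2 < 1" by linarith
  obtain p r N where u_split: "u = (\<lambda>m. p m + r m)" and p_fin: "\<And>m. N \<le> m \<Longrightarrow> p m = 0"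
    and lr: "l1 r" and small: "nrm1 r < \<epsilon>"
    using l1_split_small_tail[OF u \<epsilon>(1)] by blast
  have lp: "l1 p" by (rule l1_finite_support[OF p_fin])
  define q where "q = \<bar>x\<bar> * (nrm1 r)^2"
  have "(nrm1 r)^2 \<le> \<epsilon>^2" using small nrm1_nonneg[OF lr] by (intro power_mono) simp_all
  from mult_left_mono[OF this abs_ge_zero[of x]] have q: "0 \<le> q" "q < 1"
    unfolding q_def using \<epsilon>2 by simp_all
  define M where "M = sqrt (\<Sum>n. (norm (w n))^2)"
  have wb: "\<And>k. norm (w k) \<le> M" unfolding M_def by (rule l2_bounded) (use w in \<open>simp add: in_Hs0_iff\<close>)
  define f where "f m = one_h m + x * (hankel p (hankel u w) m + hankel r (hankel p w) m)" for m
  have fixed: "w m = f m + x * hankel r (hankel r w) m" for m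
    using eq[of m] hankel_square_split[where n=m, OF lp lr wb, folded u_split] unfolding f_def
    by (simp add: algebra_simps)
  have lf: "l1 f"
  proof -
    have fin: "hankel p g n = 0" if "N \<le> n" for g n by (rule hankel_finite_symbol[OF p_fin that])
    have "l1 one_h" by (rule l1_finite_support[of 1]) (simp add: one_h_def)
    moreover have "l1 (\<lambda>m. hankel p (hankel u w) m + 1 * hankel r (hankel p w) m)"
      using l1_lincomb(1)[OF l1_finite_support[OF fin] hankel_l1(1)[OF lr l1_finite_support[OF fin]]] .
    ultimately show ?thesis
      using l1_lincomb(1)[of one_h "\<lambda>m. hankel p (hankel u w) m + 1 * hankel r (hankel p w) m" x]
      unfolding f_def by (simp add: algebra_simps)
  qed
  show ?thesis
  proof (rule l1_of_bounded_fixed_point[where Q="\<lambda>g m. x * hankel r (hankel r g) m" and f=f, OF q _ _ _ wb lf fixed])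
    show "norm (x * hankel r (hankel r g) n) \<le> q * C" if "\<And>k. norm (g k) \<le> C" for g C n
      unfolding q_def by (rule hankel_square_contracts(1)[OF lr that])
    show "l1 (\<lambda>m. x * hankel r (hankel r g) m) \<and> nrm1 (\<lambda>m. x * hankel r (hankel r g) m) \<le> q * nrm1 g"
      if "l1 g" for g unfolding q_def by (rule hankel_square_contracts(2)[OF lr that])
    show "x * hankel r (hankel r (\<lambda>m. w m - g m)) n = x * hankel r (hankel r w) n - x * hankel r (hankel r g) n"
      if "l1 g" for g n by (rule hankel_square_contracts(3)[OF lr wb l1_le_nrm1[OF that]])
  qed
qed
section \<open>\<open>K\<^sub>u h\<close> depends boundedly and linearly on \<open>u \<in> H\<^sup>s\<close>\<close>

lemma series_Cauchy_Schwarz: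
  fixes a b :: "nat \<Rightarrow> complex"
  assumes a: "summable (\<lambda>k. (norm (a k))^2)" and b: "summable (\<lambda>k. (norm (b k))^2)"
  shows "(norm (\<Sum>k. a k * b k))^2 \<le> (\<Sum>k. (norm (a k))^2) * (\<Sum>k. (norm (b k))^2)"
proof -
  define SA where "SA = (\<Sum>k. (norm (a k))^2)"
  define SB where "SB = (\<Sum>k. (norm (b k))^2)"
  have SA0: "SA \<ge> 0" and SB0: "SB \<ge> 0" unfolding SA_def SB_def using a b by (simp_all add: suminf_nonneg)
  have le: "norm (a k * b k) \<le> ((norm (a k))^2 + (norm (b k))^2) / 2" for k
    using sum_squares_ge_zero[of "norm (a k) - norm (b k)" 0]
    by (simp add: norm_mult power2_eq_square algebra_simps)
  have sn: "summable (\<lambda>k. norm (a k * b k))"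
    by (rule summable_comparison_test'[OF summable_divide[OF summable_add[OF a b], of 2], where N=0]) (use le in simp)
  have partial: "(\<Sum>k<N. norm (a k * b k)) \<le> sqrt (SA * SB)" for N
  proof -
    have "(\<Sum>k<N. norm (a k) * norm (b k))^2 \<le> (\<Sum>k<N. (norm (a k))^2) * (\<Sum>k<N. (norm (b k))^2)"
      by (rule Cauchy_Schwarz_ineq_sum)
    also have "\<dots> \<le> SA * SB"
      unfolding SA_def SB_def
      by (intro mult_mono sum_le_suminf a b) (auto intro: sum_nonneg suminf_nonneg[OF a])
    finally show ?thesis by (simp add: real_le_rsqrt sum_nonneg norm_mult)
  qed
  have "norm (\<Sum>k. a k * b k) \<le> sqrt (SA * SB)"
    using summable_norm[OF sn] suminf_le_const[OF sn partial] by linarith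
  then have "(norm (\<Sum>k. a k * b k))^2 \<le> (sqrt (SA * SB))^2" by (rule power_mono) simp
  then show ?thesis using SA0 SB0 unfolding SA_def SB_def by simp
qed

text \<open>\<open>\<Sum>\<^sub>n\<^sub>\<ge>\<^sub>0 (n+2)\<^sup>-\<^sup>2\<^sup>s = \<zeta>(2s) - 1\<close>, finite for \<open>s > 1/2\<close>.\<close>

definition zeta_tail :: "real \<Rightarrow> real" where
  "zeta_tail s = (\<Sum>n. inverse ((2 + real n) powr (2 * s)))"

lemma zeta_tail_summable:
  assumes "s > 1/2"
  shows "summable (\<lambda>n. inverse ((2 + real n) powr (2 * s)))"
proof (rule summable_comparison_test'[OF summable_powr_shift[of "-(2 * s)"], where N=0])
  show "- (2 * s) < -1" using assms by simp
  fix n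
  have "(1 + real n) powr (2 * s) \<le> (2 + real n) powr (2 * s)" by (rule powr_mono2) (use assms in auto)
  then have "inverse ((2 + real n) powr (2 * s)) \<le> inverse ((1 + real n) powr (2 * s))"
    by (rule le_imp_inverse_le) simp
  then show "norm (inverse ((2 + real n) powr (2 * s))) \<le> (1 + real n) powr - (2 * s)"
    by (simp add: powr_minus)
qed

lemma Hs_tail_bound:
  assumes s: "s \<ge> 0" and f: "in_Hs s f"
  shows "summable (\<lambda>k. (norm (f (Suc n + k)))^2)"
    and "(\<Sum>k. (norm (f (Suc n + k)))^2)
         \<le> inverse ((2 + real n) powr (2 * s)) * (\<Sum>m. ((1 + real m) powr (2 * s)) * (norm (f m))^2)"
proof -
  let ?W = "(2 + real n) powr (2 * s)" and ?w = "\<lambda>m. ((1 + real m) powr (2 * s)) * (norm (f m))^2"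
  have fs: "summable ?w" using f unfolding in_Hs_def .
  show s2: "summable (\<lambda>k. (norm (f (Suc n + k)))^2)"
    using tail_le_suminf(1)[OF Hs_l2[OF s f], of "Suc n"] by simp
  have le: "(norm (f (Suc n + k)))^2 \<le> inverse ?W * ?w (Suc n + k)" for k
  proof -
    have "?W \<le> (1 + real (Suc n + k)) powr (2 * s)" by (rule powr_mono2) (use s in auto)
    then have "?W * (norm (f (Suc n + k)))^2 \<le> ?w (Suc n + k)" by (rule mult_right_mono) simp
    then show ?thesis by (simp add: field_simps)
  qed
  have "(\<Sum>k. (norm (f (Suc n + k)))^2) \<le> (\<Sum>k. inverse ?W * ?w (Suc n + k))"
    by (rule suminf_le[OF le s2 summable_mult[OF tail_le_suminf(1)[OF fs]]]) simp
  also have "\<dots> = inverse ?W * (\<Sum>k. ?w (Suc n + k))"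
    by (rule suminf_mult[OF tail_le_suminf(1)[OF fs]]) simp
  also have "\<dots> \<le> inverse ?W * suminf ?w"
    by (rule mult_left_mono[OF tail_le_suminf(2)[OF fs]]) simp_all
  finally show "(\<Sum>k. (norm (f (Suc n + k)))^2) \<le> inverse ?W * suminf ?w" .
qed

text \<open>The Hilbert--Schmidt type estimate \<open>\<parallel>K\<^sub>f h\<parallel>\<^sub>2\<^sup>2 \<le> (\<zeta>(2s)-1) \<parallel>f\<parallel>\<^sub>s\<^sup>2 \<parallel>h\<parallel>\<^sub>2\<^sup>2\<close>,
  from Cauchy--Schwarz in each coefficient \<open>(K\<^sub>f h)\<^sub>n = \<Sum>\<^sub>k f\<^sub>n\<^sub>+\<^sub>1\<^sub>+\<^sub>k h\<^sub>k\<^sup>*\<close>.\<close>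

lemma Kop_l2_bound:
  assumes s: "s > 1/2" and f: "in_Hs s f" and h: "summable (\<lambda>k. (norm (h k))^2)"
  shows "summable (\<lambda>n. (norm (Kop f h n))^2)"
    and "(\<Sum>n. (norm (Kop f h n))^2)
         \<le> zeta_tail s * (\<Sum>m. ((1 + real m) powr (2 * s)) * (norm (f m))^2) * (\<Sum>k. (norm (h k))^2)"
proof -
  define SF where "SF = (\<Sum>m. ((1 + real m) powr (2 * s)) * (norm (f m))^2)"
  define SH where "SH = (\<Sum>k. (norm (h k))^2)"
  have SH0: "SH \<ge> 0" unfolding SH_def using h by (simp add: suminf_nonneg)
  have hb: "\<And>k. norm (h k) \<le> sqrt SH" unfolding SH_def by (rule l2_bounded[OF h])
  have pt: "(norm (Kop f h n))^2 \<le> inverse ((2 + real n) powr (2 * s)) * SF * SH" for n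
  proof -
    have "(norm (Kop f h n))^2 \<le> (\<Sum>k. (norm (f (Suc n + k)))^2) * SH"
      unfolding Kop_eq_hankel[OF Hs_l1[OF s f] hb] hankel_def SH_def
      using series_Cauchy_Schwarz[OF Hs_tail_bound(1)[of s f n], of "\<lambda>k. cnj (h k)"] s f h by simp
    also have "\<dots> \<le> inverse ((2 + real n) powr (2 * s)) * SF * SH"
      unfolding SF_def by (rule mult_right_mono[OF Hs_tail_bound(2) SH0]) (use s f in simp_all)
    finally show ?thesis .
  qed
  have zs: "summable (\<lambda>n. inverse ((2 + real n) powr (2 * s)) * SF * SH)"
    using zeta_tail_summable[OF s] by (intro summable_mult2)
  show ks: "summable (\<lambda>n. (norm (Kop f h n))^2)"
    by (rule summable_comparison_test'[OF zs, where N=0]) (use pt in simp)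
  have "(\<Sum>n. (norm (Kop f h n))^2) \<le> (\<Sum>n. inverse ((2 + real n) powr (2 * s)) * SF * SH)"
    by (rule suminf_le[OF pt ks zs])
  also have "\<dots> = zeta_tail s * SF * SH"
    unfolding zeta_tail_def using suminf_mult2[OF zeta_tail_summable[OF s], of "SF * SH"] by (simp add: ac_simps)
  finally show "(\<Sum>n. (norm (Kop f h n))^2) \<le> zeta_tail s * SF * SH"
    unfolding SF_def SH_def .
qed

lemma Kop_norm_bound:
  assumes s: "s > 1/2" and f: "in_Hs s f" and h: "summable (\<lambda>k. (norm (h k))^2)"
  shows "hs_norm 0 (Kop f h) \<le> sqrt (zeta_tail s * (\<Sum>k. (norm (h k))^2)) * hs_norm s f"
    and "hs_norm 0 (Kop f h) \<ge> 0"
proof -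
  have "hs_norm 0 (Kop f h) = sqrt (\<Sum>n. (norm (Kop f h n))^2)" unfolding hs_norm_def by simp
  also have "\<dots> \<le> sqrt (zeta_tail s * (\<Sum>m. ((1 + real m) powr (2 * s)) * (norm (f m))^2) * (\<Sum>k. (norm (h k))^2))"
    by (rule real_sqrt_le_mono[OF Kop_l2_bound(2)[OF s f h]])
  also have "\<dots> = sqrt (zeta_tail s * (\<Sum>k. (norm (h k))^2)) * hs_norm s f"
    unfolding hs_norm_def by (simp add: real_sqrt_mult[symmetric] ac_simps)
  finally show "hs_norm 0 (Kop f h) \<le> sqrt (zeta_tail s * (\<Sum>k. (norm (h k))^2)) * hs_norm s f" .
  show "hs_norm 0 (Kop f h) \<ge> 0"
    unfolding hs_norm_def using suminf_nonneg[OF Kop_l2_bound(1)[OF s f h]] by simp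
qed

lemma Kop_difference_quotient:
  assumes a: "l1 a" and b: "l1 b" and e: "l1 e" and h: "\<And>k. norm (h k) \<le> B"
  shows "Kop (\<lambda>m. (a m - b m) / c - e m) h n = (Kop a h n - Kop b h n) / c - Kop e h n"
proof -
  have Tzb: "\<And>k. norm (Tz h k) \<le> B" by (rule Tz_bound[OF h])
  note sa = hankel_summable(2)[where g="Tz h" and n=n, OF a Tzb]
    and sb = hankel_summable(2)[where g="Tz h" and n=n, OF b Tzb]
    and se = hankel_summable(2)[where g="Tz h" and n=n, OF e Tzb]
  have "Kop (\<lambda>m. (a m - b m) / c - e m) h n
      = (\<Sum>k. (a (n + k) * cnj (Tz h k) - b (n + k) * cnj (Tz h k)) / c - e (n + k) * cnj (Tz h k))"
    unfolding Kop_def hankel_def by (simp add: algebra_simps diff_divide_distrib)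
  also have "\<dots> = (Kop a h n - Kop b h n) / c - Kop e h n"
    unfolding Kop_def hankel_def
    using suminf_diff[OF summable_divide[OF summable_diff[OF sa sb]] se, of c]
      suminf_divide[OF summable_diff[OF sa sb], of c] suminf_diff[OF sa sb] by simp
  finally show ?thesis .
qed

text \<open>Differentiation under \<open>K\<close>: since \<open>f \<mapsto> K\<^sub>f h\<close> is linear and bounded from \<open>H\<^sup>s\<close> to
  \<open>\<ell>\<^sup>2\<close>, an \<open>H\<^sup>s\<close>-derivative \<open>u'\<close> of \<open>u\<close> yields the \<open>\<ell>\<^sup>2\<close>-derivative \<open>K\<^sub>u\<^sub>' h\<close> of
  \<open>K\<^sub>u h\<close>.\<close>

lemma Kop_has_deriv:
  assumes s: "s > 1/2" and u: "\<And>\<tau>. in_Hs s (u \<tau>)" and der: "hs_has_deriv s u u' t"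
    and h: "L2plus h"
  shows "hs_has_deriv 0 (\<lambda>\<tau>. Kop (u \<tau>) h) (Kop u' h) t"
proof -
  have u': "in_Hs s u'"
    and lim: "((\<lambda>\<tau>. hs_norm s (\<lambda>n. (u (t + \<tau>) n - u t n) / complex_of_real \<tau> - u' n)) \<longlongrightarrow> 0) (at 0)"
    using der unfolding hs_has_deriv_def by simp_all
  have h2: "summable (\<lambda>k. (norm (h k))^2)" using h by (simp add: in_Hs0_iff)
  have hb: "\<And>k. norm (h k) \<le> sqrt (\<Sum>k. (norm (h k))^2)" by (rule l2_bounded[OF h2])
  define K where "K = sqrt (zeta_tail s * (\<Sum>k. (norm (h k))^2))"
  define d where "d \<tau> = (\<lambda>n. (u (t + \<tau>) n - u t n) / complex_of_real \<tau> - u' n)" for \<tau>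
  have d: "in_Hs s (d \<tau>)" for \<tau>
  proof -
    have "in_Hs s (\<lambda>m. 1 * (inverse \<tau> * u (t + \<tau>) m + (- inverse \<tau>) * u t m) + (-1) * u' m)"
      by (intro in_Hs_lincomb u u')
    moreover have "(\<lambda>m. 1 * (inverse \<tau> * u (t + \<tau>) m + (- inverse \<tau>) * u t m) + (-1) * u' m) = d \<tau>"
      unfolding d_def by (rule ext) (simp add: divide_inverse algebra_simps)
    ultimately show ?thesis by simp
  qed
  have Kd: "(\<lambda>n. (Kop (u (t + \<tau>)) h n - Kop (u t) h n) / complex_of_real \<tau> - Kop u' h n) = Kop (d \<tau>) h" for \<tau>
    unfolding d_def
    by (rule ext, rule Kop_difference_quotient[OF Hs_l1[OF s u] Hs_l1[OF s u] Hs_l1[OF s u'] hb, symmetric])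
  have "((\<lambda>\<tau>. K * hs_norm s (d \<tau>)) \<longlongrightarrow> K * 0) (at 0)"
    by (rule tendsto_mult[OF tendsto_const]) (use lim in \<open>simp add: d_def\<close>)
  moreover have "\<forall>\<^sub>F \<tau> in at 0. norm (hs_norm 0 (Kop (d \<tau>) h)) \<le> K * hs_norm s (d \<tau>)"
    using Kop_norm_bound[OF s d h2] unfolding K_def by (intro always_eventually allI) simp
  ultimately have "((\<lambda>\<tau>. hs_norm 0 (Kop (d \<tau>) h)) \<longlongrightarrow> 0) (at 0)"
    by (simp add: Lim_null_comparison)
  moreover have "in_Hs 0 (Kop u' h)" unfolding in_Hs0_iff by (rule Kop_l2_bound(1)[OF s u' h2])
  ultimately show ?thesis unfolding hs_has_deriv_def Kd by simp
qed
section \<open>The Lax equation for \<open>K\<^sub>u\<close>\<close>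

lemma w_of_solves:
  assumes "inv_op x u"
  shows "L2plus (w_of x u)"
    and "\<And>m. w_of x u m - complex_of_real x * hankel u (hankel u (w_of x u)) m = one_h m"
proof -
  have "\<exists>!g. L2plus g \<and> (\<lambda>n. g n - complex_of_real x * hankel u (hankel u g) n) = one_h"
    using assms one_h_L2 unfolding inv_op_def by blast
  from theI'[OF this] have "L2plus (w_of x u)
      \<and> (\<lambda>n. w_of x u n - complex_of_real x * hankel u (hankel u (w_of x u)) n) = one_h"
    unfolding w_of_def .
  then show "L2plus (w_of x u)" and "\<And>m. w_of x u m - complex_of_real x * hankel u (hankel u (w_of x u)) m = one_h m"
    by (auto dest: fun_cong)
qed

lemma C_op_commutator:
  assumes u: "l1 u" and inv: "inv_op x u" and h: "\<And>k. norm (h k) \<le> B"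
  defines "w \<equiv> w_of x u"
  shows "(\<lambda>n. C_op x u (Kop u h) n - Kop u (C_op x u h) n)
       = Kop (\<lambda>n. complex_of_real x / (2 * \<i>) * hmult w (hankel u w) n) h"
proof
  fix n
  have eq: "\<And>m. w m - complex_of_real x * hankel u (hankel u w) m = one_h m"
    unfolding w_def by (rule w_of_solves(2)[OF inv])
  have lw: "l1 w" by (rule inverse_in_l1[OF u _ eq]) (use w_of_solves(1)[OF inv] in \<open>simp add: w_def\<close>)
  show "C_op x u (Kop u h) n - Kop u (C_op x u h) n
      = Kop (\<lambda>n. complex_of_real x / (2 * \<i>) * hmult w (hankel u w) n) h n"
    unfolding C_op_def Let_def w_def[symmetric] by (rule commutator_identity[OF u lw h eq])
qed

theorem corollary4:
  fixes s x :: real and u :: "real \<Rightarrow> hardy"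
  assumes "s > 1/2"
    and "smooth_Hs_curve s u"
    and "\<forall>t. inv_op x (u t)"
    and "\<forall>t. hs_has_deriv s u
           (\<lambda>n. complex_of_real x / (2 * \<i>) *
                hmult (w_of x (u t)) (hankel (u t) (w_of x (u t))) n) t"
  shows "\<forall>t h. L2plus h \<longrightarrow>
           hs_has_deriv 0 (\<lambda>\<tau>. Kop (u \<tau>) h)
             (\<lambda>n. C_op x (u t) (Kop (u t) h) n - Kop (u t) (C_op x (u t) h) n) t"
proof (intro allI impI)
  fix t :: real and h :: hardy
  assume h: "L2plus h"
  have uHs: "in_Hs s (u \<tau>)" for \<tau>
    using assms(2) unfolding smooth_Hs_curve_def by (metis (no_types))
  have hb: "\<And>k. norm (h k) \<le> sqrt (\<Sum>k. (norm (h k))^2)"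
    by (rule l2_bounded) (use h in \<open>simp add: in_Hs0_iff\<close>)
  have "hs_has_deriv 0 (\<lambda>\<tau>. Kop (u \<tau>) h)
      (Kop (\<lambda>n. complex_of_real x / (2 * \<i>) * hmult (w_of x (u t)) (hankel (u t) (w_of x (u t))) n) h) t"
    by (rule Kop_has_deriv[OF assms(1) uHs _ h]) (use assms(4) in blast)
  then show "hs_has_deriv 0 (\<lambda>\<tau>. Kop (u \<tau>) h)
      (\<lambda>n. C_op x (u t) (Kop (u t) h) n - Kop (u t) (C_op x (u t) h) n) t"
    unfolding C_op_commutator[OF Hs_l1[OF assms(1) uHs] spec[OF assms(3)] hb] .
qed

end
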